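(* For every $n\ge 1$, the maximum number of flippable faces of a locally valid MV assignment of $M_{2,n}$ is $2n$; it is attained by exactly two locally valid MV assignments, and both are colored blue.
   Context: The $2\times n$ Miura-ori $M_{2,n}$ ($n\ge1$) has faces $\alpha_{i,j}$ ($i\in\{1,2\}$, $j\in\{1,\dots,n\}$), interior vertices $x_1,\dots,x_{n-1}$, and creases $e_0$ and $e_{3k-1},e_{3k},e_{3k+1}$ ($k=1,\dots,n-1$). At $x_k$ the creases are left $e_{3k-3}$, top $e_{3k-1}$, right $e_{3k}$, bottom $e_{3k+1}$. Face $\alpha_{1,j}$ is bordered by those of $e_{3j-4}$ (iff $j\ge2$), $e_{3j-3}$, $e_{3j-1}$ (iff $j\le n-1$); $\alpha_{2,j}$ by those of $e_{3j-2}$ (iff $j\ge2$), $e_{3j-3}$, $e_{3j+1}$ (iff $j\le n-1$). An MV assignment $\mu$ maps creases to $\{1,-1\}$; it is locally valid if for each $k$ exactly one of $\mu(e_{3k-1}),\mu(e_{3k}),\mu(e_{3k+1})$ differs from $\mu(e_{3k-3})$. The face flip $\mu_\alpha$ negates $\mu$ on the creases bordering $\alpha$; $\alpha$ is flippable under $\mu$ if $\mu,\mu_\alpha$ are both locally valid; $f(\mu)$ is the number of flippable faces. For $n\ge2$, the restriction of a locally valid $\mu'$ on $M_{2,n}$ to the creases of $M_{2,n-1}$ (all but $e_{3n-4},e_{3n-3},e_{3n-2}$) is a locally valid $\mu$ on $M_{2,n-1}$, and $\mu'$ is colored blue, orange or magenta according as $f(\mu')-f(\mu)=2,1,0$. Both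 locally valid assignments of $M_{2,1}$ are colored blue. *)

theory Defs
  imports Main
begin

(* Creases of M_{2,n}: e_0 and e_{3k-1}, e_{3k}, e_{3k+1} for k = 1..n-1,
   i.e. the index set {0} \<union> {2..3n-2} (just {0} when n = 1). *)
definition creases :: "nat \<Rightarrow> nat set" where
  "creases n = {0} \<union> (\<Union>k\<in>{1..<n}. {3*k-1, 3*k, 3*k+1})"

definition MV_assignments :: "nat \<Rightarrow> (nat \<Rightarrow> int) set" where
  "MV_assignments n = {\<mu>. (\<forall>e\<in>creases n. \<mu> e \<in> {1, -1}) \<and> (\<forall>e. e \<notin> creases n \<longrightarrow> \<mu> e = 0)}"

(* locally valid: at each interior vertex x_k exactly one of top/right/bottom
   differs from the left crease e_{3k-3} *)
definition locally_valid :: "nat \<Rightarrow> (nat \<Rightarrow> int) \<Rightarrow> bool" where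
  "locally_valid n \<mu> \<longleftrightarrow> \<mu> \<in> MV_assignments n \<and>
     (\<forall>k\<in>{1..<n}. card {e \<in> {3*k-1, 3*k, 3*k+1}. \<mu> e \<noteq> \<mu> (3*k-3)} = 1)"

definition faces :: "nat \<Rightarrow> (nat \<times> nat) set" where
  "faces n = {1,2} \<times> {1..n}"

definition face_creases :: "nat \<Rightarrow> nat \<times> nat \<Rightarrow> nat set" where
  "face_creases n f = (case f of (i, j) \<Rightarrow>
     (if i = 1 then {e. (j \<ge> 2 \<and> e = 3*j-4) \<or> e = 3*j-3 \<or> (j \<le> n-1 \<and> e = 3*j-1)}
      else {e. (j \<ge> 2 \<and> e = 3*j-2) \<or> e = 3*j-3 \<or> (j \<le> n-1 \<and> e = 3*j+1)}))"

definition face_flip :: "nat \<Rightarrow> nat \<times> nat \<Rightarrow> (nat \<Rightarrow> int) \<Rightarrow> (nat \<Rightarrow> int)" where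
  "face_flip n f \<mu> = (\<lambda>e. if e \<in> face_creases n f then - \<mu> e else \<mu> e)"

definition flippable :: "nat \<Rightarrow> (nat \<Rightarrow> int) \<Rightarrow> nat \<times> nat \<Rightarrow> bool" where
  "flippable n \<mu> f \<longleftrightarrow> locally_valid n \<mu> \<and> locally_valid n (face_flip n f \<mu>)"

definition num_flippable :: "nat \<Rightarrow> (nat \<Rightarrow> int) \<Rightarrow> nat" where
  "num_flippable n \<mu> = card {f \<in> faces n. flippable n \<mu> f}"

definition restrict_MV :: "nat \<Rightarrow> (nat \<Rightarrow> int) \<Rightarrow> (nat \<Rightarrow> int)" where
  "restrict_MV n \<mu> = (\<lambda>e. if e \<in> creases (n-1) then \<mu> e else 0)"

definition blue :: "nat \<Rightarrow> (nat \<Rightarrow> int) \<Rightarrow> bool" where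
  "blue n \<mu> \<longleftrightarrow> locally_valid n \<mu> \<and>
     (n = 1 \<or> (n \<ge> 2 \<and> int (num_flippable n \<mu>) - int (num_flippable (n-1) (restrict_MV n \<mu>)) = 2))"

end

theory Submission
  imports Defs
begin

(* Flipping alpha_{1,k} negates the left and the top crease of x_k and nothing else there, and
   flipping alpha_{2,k} negates the left and the bottom crease. So if every face is flippable, at
   each vertex the top and bottom creases agree with the left one and the right crease is the odd
   one out; conversely such an assignment stays locally valid under every face flip. Going from
   left to right, these assignments are determined by mu(e_0): they alternate with the parity of
   the crease index, giving exactly two of them, each with all 2n faces flippable. Restricting
   either to M_{2,n-1} yields one of the two such assignments there, with 2(n-1) flippable
   faces, so it is blue. *)

lemma mem_creases_iff: "e \<in> creases n \<longleftrightarrow> e = 0 \<or> (2 \<le> e \<and> e + 2 \<le> 3 * n)"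
proof
  assume "e \<in> creases n"
  then show "e = 0 \<or> (2 \<le> e \<and> e + 2 \<le> 3 * n)"
    unfolding creases_def by auto
next
  assume e: "e = 0 \<or> (2 \<le> e \<and> e + 2 \<le> 3 * n)"
  show "e \<in> creases n"
  proof (cases "e = 0")
    case False
    define k where "k = (e + 1) div 3"
    have "k \<in> {1..<n}" "e \<in> {3*k-1, 3*k, 3*k+1}"
      using e False unfolding k_def by auto
    then show ?thesis unfolding creases_def by blast
  qed (simp add: creases_def)
qed

lemma vertex_creases_in_creases:
  "k \<in> {1..<n} \<Longrightarrow> {3*k-3, 3*k-1, 3*k, 3*k+1} \<subseteq> creases n"
  by (auto simp: mem_creases_iff)

lemma MV_assignment_sign:
  "\<mu> \<in> MV_assignments n \<Longrightarrow> e \<in> creases n \<Longrightarrow> \<mu> e = 1 \<or> \<mu> e = -1"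
  unfolding MV_assignments_def by auto

lemma face_flip_MV_assignment:
  "\<mu> \<in> MV_assignments n \<Longrightarrow> face_flip n f \<mu> \<in> MV_assignments n"
  unfolding MV_assignments_def face_flip_def by auto

definition vertex_valid :: "(nat \<Rightarrow> int) \<Rightarrow> nat \<Rightarrow> bool" where
  "vertex_valid \<mu> k \<longleftrightarrow>
     (\<mu> (3*k-1) \<noteq> \<mu> (3*k-3) \<and> \<mu> (3*k) = \<mu> (3*k-3) \<and> \<mu> (3*k+1) = \<mu> (3*k-3)) \<or>
     (\<mu> (3*k-1) = \<mu> (3*k-3) \<and> \<mu> (3*k) \<noteq> \<mu> (3*k-3) \<and> \<mu> (3*k+1) = \<mu> (3*k-3)) \<or>
     (\<mu> (3*k-1) = \<mu> (3*k-3) \<and> \<mu> (3*k) = \<mu> (3*k-3) \<and> \<mu> (3*k+1) \<noteq> \<mu> (3*k-3))"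

lemma card_filter_three_eq_1_iff:
  assumes "a \<noteq> b" "a \<noteq> c" "b \<noteq> c"
  shows "card {e \<in> {a, b, c}. P e} = 1 \<longleftrightarrow>
    (P a \<and> \<not> P b \<and> \<not> P c) \<or> (\<not> P a \<and> P b \<and> \<not> P c) \<or> (\<not> P a \<and> \<not> P b \<and> P c)"
proof -
  have filter_eq: "{e \<in> {a, b, c}. P e} =
      (if P a then {a} else {}) \<union> (if P b then {b} else {}) \<union> (if P c then {c} else {})"
    by auto
  show ?thesis
    unfolding filter_eq using assms
    by (cases "P a"; cases "P b"; cases "P c") (simp_all add: card_insert_if)
qed

lemma locally_valid_iff:
  "locally_valid n \<mu> \<longleftrightarrow> \<mu> \<in> MV_assignments n \<and> (\<forall>k\<in>{1..<n}. vertex_valid \<mu> k)"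
proof -
  have "card {e \<in> {3*k-1, 3*k, 3*k+1}. \<mu> e \<noteq> \<mu> (3*k-3)} = 1 \<longleftrightarrow> vertex_valid \<mu> k"
    if "k \<in> {1..<n}" for k
    using that unfolding vertex_valid_def by (subst card_filter_three_eq_1_iff) auto
  then show ?thesis
    unfolding locally_valid_def by auto
qed

lemma top_face_creases_at_vertex:
  assumes "1 \<le> k" "1 \<le> j"
  shows "3*k-3 \<in> face_creases n (1, j) \<longleftrightarrow> k = j"
    and "3*k-1 \<in> face_creases n (1, j) \<longleftrightarrow> k + 1 = j \<or> (k = j \<and> j \<le> n - 1)"
    and "3*k \<in> face_creases n (1, j) \<longleftrightarrow> k + 1 = j"
    and "3*k+1 \<notin> face_creases n (1, j)"
  using assms by (auto simp: face_creases_def; arith)+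

lemma bottom_face_creases_at_vertex:
  assumes "1 \<le> k" "1 \<le> j"
  shows "3*k-3 \<in> face_creases n (2, j) \<longleftrightarrow> k = j"
    and "3*k+1 \<in> face_creases n (2, j) \<longleftrightarrow> k + 1 = j \<or> (k = j \<and> j \<le> n - 1)"
    and "3*k \<in> face_creases n (2, j) \<longleftrightarrow> k + 1 = j"
    and "3*k-1 \<notin> face_creases n (2, j)"
  using assms by (auto simp: face_creases_def; arith)+

definition right_crease_odd :: "nat \<Rightarrow> (nat \<Rightarrow> int) \<Rightarrow> bool" where
  "right_crease_odd n \<mu> \<longleftrightarrow> (\<forall>k\<in>{1..<n}.
     \<mu> (3*k-1) = \<mu> (3*k-3) \<and> \<mu> (3*k+1) = \<mu> (3*k-3) \<and> \<mu> (3*k) = - \<mu> (3*k-3))"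

lemma face_flip_at_own_vertex:
  assumes "1 \<le> k" "k < n"
  shows "face_flip n (1, k) \<mu> (3*k-3) = - \<mu> (3*k-3)" "face_flip n (1, k) \<mu> (3*k-1) = - \<mu> (3*k-1)"
    "face_flip n (1, k) \<mu> (3*k) = \<mu> (3*k)" "face_flip n (1, k) \<mu> (3*k+1) = \<mu> (3*k+1)"
    and "face_flip n (2, k) \<mu> (3*k-3) = - \<mu> (3*k-3)" "face_flip n (2, k) \<mu> (3*k+1) = - \<mu> (3*k+1)"
    "face_flip n (2, k) \<mu> (3*k) = \<mu> (3*k)" "face_flip n (2, k) \<mu> (3*k-1) = \<mu> (3*k-1)"
  using assms top_face_creases_at_vertex(4)[OF assms(1,1)] bottom_face_creases_at_vertex(4)[OF assms(1,1)]
  unfolding face_flip_def top_face_creases_at_vertex(1-3)[OF assms(1,1)]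
    bottom_face_creases_at_vertex(1-3)[OF assms(1,1)]
  by auto

lemma all_flippable_imp_right_crease_odd:
  assumes valid: "locally_valid n \<mu>" and all: "\<forall>f\<in>faces n. flippable n \<mu> f"
  shows "right_crease_odd n \<mu>"
  unfolding right_crease_odd_def
proof
  fix k assume k: "k \<in> {1..<n}"
  then have k_bounds: "1 \<le> k" "k < n" by auto
  have MV: "\<mu> \<in> MV_assignments n" and at_k: "vertex_valid \<mu> k"
    using valid k by (auto simp: locally_valid_iff)
  have "(1, k) \<in> faces n" "(2, k) \<in> faces n"
    using k by (auto simp: faces_def)
  then have flip_top: "vertex_valid (face_flip n (1, k) \<mu>) k"
    and flip_bottom: "vertex_valid (face_flip n (2, k) \<mu>) k"
    using all k by (auto simp: flippable_def locally_valid_iff)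
  have "\<mu> e = 1 \<or> \<mu> e = -1" if "e \<in> {3*k-3, 3*k-1, 3*k, 3*k+1}" for e
    using that MV_assignment_sign[OF MV] vertex_creases_in_creases[OF k] by blast
  then have signs: "\<mu> (3*k-3) = 1 \<or> \<mu> (3*k-3) = -1" "\<mu> (3*k-1) = 1 \<or> \<mu> (3*k-1) = -1"
    "\<mu> (3*k) = 1 \<or> \<mu> (3*k) = -1" "\<mu> (3*k+1) = 1 \<or> \<mu> (3*k+1) = -1"
    by simp_all
  have "\<mu> (3*k-1) = \<mu> (3*k-3)"
    using flip_top at_k signs unfolding vertex_valid_def face_flip_at_own_vertex[OF k_bounds] by auto
  moreover have "\<mu> (3*k+1) = \<mu> (3*k-3)"
    using flip_bottom at_k signs unfolding vertex_valid_def face_flip_at_own_vertex[OF k_bounds] by auto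
  ultimately show "\<mu> (3*k-1) = \<mu> (3*k-3) \<and> \<mu> (3*k+1) = \<mu> (3*k-3) \<and> \<mu> (3*k) = - \<mu> (3*k-3)"
    using at_k signs unfolding vertex_valid_def by auto
qed

lemma right_crease_odd_imp_flippable:
  assumes valid: "locally_valid n \<mu>" and odd: "right_crease_odd n \<mu>" and f: "f \<in> faces n"
  shows "flippable n \<mu> f"
proof -
  obtain j where j: "1 \<le> j" and f_cases: "f = (1, j) \<or> f = (2, j)"
    using f by (auto simp: faces_def)
  have MV: "\<mu> \<in> MV_assignments n"
    using valid by (auto simp: locally_valid_iff)
  have "vertex_valid (face_flip n f \<mu>) k" if k: "k \<in> {1..<n}" for k
  proof -
    have k_bounds: "1 \<le> k" "k \<le> n - 1" using k by auto
    have sign: "\<mu> (3*k-3) = 1 \<or> \<mu> (3*k-3) = -1"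
      using MV_assignment_sign[OF MV] vertex_creases_in_creases[OF k] by auto
    have pattern: "\<mu> (3*k-1) = \<mu> (3*k-3)" "\<mu> (3*k+1) = \<mu> (3*k-3)" "\<mu> (3*k) = - \<mu> (3*k-3)"
      using odd k unfolding right_crease_odd_def by auto
    from f_cases show ?thesis
    proof
      assume f_eq: "f = (1, j)"
      show ?thesis
        using sign pattern k_bounds top_face_creases_at_vertex(4)[OF k_bounds(1) j]
        unfolding f_eq vertex_valid_def face_flip_def top_face_creases_at_vertex(1-3)[OF k_bounds(1) j]
        by auto
    next
      assume f_eq: "f = (2, j)"
      show ?thesis
        using sign pattern k_bounds bottom_face_creases_at_vertex(4)[OF k_bounds(1) j]
        unfolding f_eq vertex_valid_def face_flip_def bottom_face_creases_at_vertex(1-3)[OF k_bounds(1) j]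
        by auto
    qed
  qed
  then show ?thesis
    using valid face_flip_MV_assignment[OF MV] unfolding flippable_def
    by (auto simp: locally_valid_iff)
qed

lemma card_faces: "card (faces n) = 2 * n"
  and finite_faces: "finite (faces n)"
  unfolding faces_def by (auto simp: card_cartesian_product)

lemma num_flippable_le: "num_flippable n \<mu> \<le> 2 * n"
  unfolding num_flippable_def card_faces[symmetric]
  by (rule card_mono[OF finite_faces]) blast

lemma num_flippable_eq_iff_right_crease_odd:
  assumes "locally_valid n \<mu>"
  shows "num_flippable n \<mu> = 2 * n \<longleftrightarrow> right_crease_odd n \<mu>"
proof -
  have "num_flippable n \<mu> = 2 * n \<longleftrightarrow> {f \<in> faces n. flippable n \<mu> f} = faces n"
    unfolding num_flippable_def card_faces[symmetric]
    using card_subset_eq[OF finite_faces, of "{f \<in> faces n. flippable n \<mu> f}"] by auto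
  also have "\<dots> \<longleftrightarrow> right_crease_odd n \<mu>"
    using assms all_flippable_imp_right_crease_odd right_crease_odd_imp_flippable by blast
  finally show ?thesis .
qed

definition alternating_MV :: "nat \<Rightarrow> int \<Rightarrow> (nat \<Rightarrow> int)" where
  "alternating_MV n s = (\<lambda>e. if e \<in> creases n then (if even e then s else - s) else 0)"

lemma alternating_MV_at_vertex:
  assumes k: "k \<in> {1..<n}"
  shows "alternating_MV n s (3*k-3) = (if even k then - s else s)"
    and "alternating_MV n s (3*k-1) = (if even k then - s else s)"
    and "alternating_MV n s (3*k+1) = (if even k then - s else s)"
    and "alternating_MV n s (3*k) = (if even k then s else - s)"
proof -
  have "1 \<le> k" using k by auto
  then have "even (3*k-3) \<longleftrightarrow> odd k" "even (3*k-1) \<longleftrightarrow> odd k" "even (3*k+1) \<longleftrightarrow> odd k"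
      "even (3*k) \<longleftrightarrow> even k"
    by presburger+
  with vertex_creases_in_creases[OF k] show
    "alternating_MV n s (3*k-3) = (if even k then - s else s)"
    "alternating_MV n s (3*k-1) = (if even k then - s else s)"
    "alternating_MV n s (3*k+1) = (if even k then - s else s)"
    "alternating_MV n s (3*k) = (if even k then s else - s)"
    unfolding alternating_MV_def by auto
qed

lemma alternating_MV_valid:
  assumes "s = 1 \<or> s = -1"
  shows "locally_valid n (alternating_MV n s)"
    and "right_crease_odd n (alternating_MV n s)"
proof -
  have "alternating_MV n s \<in> MV_assignments n"
    using assms unfolding MV_assignments_def alternating_MV_def by auto
  moreover have "vertex_valid (alternating_MV n s) k" if "k \<in> {1..<n}" for k
    using assms unfolding vertex_valid_def alternating_MV_at_vertex[OF that] by auto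
  ultimately show "locally_valid n (alternating_MV n s)"
    by (simp add: locally_valid_iff)
  show "right_crease_odd n (alternating_MV n s)"
    unfolding right_crease_odd_def
  proof
    fix k assume "k \<in> {1..<n}"
    then show "alternating_MV n s (3*k-1) = alternating_MV n s (3*k-3) \<and>
        alternating_MV n s (3*k+1) = alternating_MV n s (3*k-3) \<and>
        alternating_MV n s (3*k) = - alternating_MV n s (3*k-3)"
      unfolding alternating_MV_at_vertex[OF \<open>k \<in> {1..<n}\<close>] by simp
  qed
qed

lemma num_flippable_alternating_MV:
  "s = 1 \<or> s = -1 \<Longrightarrow> num_flippable n (alternating_MV n s) = 2 * n"
  using alternating_MV_valid num_flippable_eq_iff_right_crease_odd by blast

lemma right_crease_odd_eq_alternating_MV:
  assumes valid: "locally_valid n \<mu>" and odd: "right_crease_odd n \<mu>"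
  shows "\<mu> = alternating_MV n (\<mu> 0)"
proof
  fix e
  have MV: "\<mu> \<in> MV_assignments n"
    using valid by (auto simp: locally_valid_iff)
  have right: "\<mu> (3*k) = (if even k then \<mu> 0 else - \<mu> 0)" if "k < n" for k
    using that
  proof (induction k)
    case (Suc k)
    then have "\<mu> (3 * Suc k) = - \<mu> (3 * k)"
      using odd unfolding right_crease_odd_def by force
    then show ?case using Suc by auto
  qed simp
  show "\<mu> e = alternating_MV n (\<mu> 0) e"
  proof (cases "e \<in> creases n \<and> e \<noteq> 0")
    case True
    define k where "k = (e + 1) div 3"
    have k: "k \<in> {1..<n}"
      using True unfolding k_def mem_creases_iff by auto
    have "e = 3*k-1 \<or> e = 3*k \<or> e = 3*k+1"
      unfolding k_def by auto
    then show ?thesis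
      using odd k right[of k] alternating_MV_at_vertex[OF k, of "\<mu> 0"]
      unfolding right_crease_odd_def by auto
  next
    case False
    then show ?thesis
      using MV unfolding MV_assignments_def alternating_MV_def by auto
  qed
qed

lemma max_flippable_assignments:
  "{\<mu>. locally_valid n \<mu> \<and> num_flippable n \<mu> = 2 * n} = {alternating_MV n 1, alternating_MV n (-1)}"
proof (intro equalityI subsetI)
  fix \<mu> assume "\<mu> \<in> {\<mu>. locally_valid n \<mu> \<and> num_flippable n \<mu> = 2 * n}"
  then have valid: "locally_valid n \<mu>" and odd: "right_crease_odd n \<mu>"
    using num_flippable_eq_iff_right_crease_odd by auto
  have "\<mu> 0 = 1 \<or> \<mu> 0 = -1"
    using valid MV_assignment_sign[of \<mu> n 0] by (simp add: locally_valid_iff creases_def)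
  then show "\<mu> \<in> {alternating_MV n 1, alternating_MV n (-1)}"
    using right_crease_odd_eq_alternating_MV[OF valid odd] by auto
qed (auto simp: alternating_MV_valid num_flippable_alternating_MV)

lemma alternating_MV_ne: "alternating_MV n 1 \<noteq> alternating_MV n (-1)"
proof
  assume "alternating_MV n 1 = alternating_MV n (-1)"
  then have "alternating_MV n 1 0 = alternating_MV n (-1) 0" by simp
  then show False by (simp add: alternating_MV_def creases_def)
qed

lemma restrict_alternating_MV: "restrict_MV n (alternating_MV n s) = alternating_MV (n - 1) s"
  unfolding restrict_MV_def alternating_MV_def mem_creases_iff by (rule ext) auto

theorem lemma4p6:
  fixes n :: nat
  assumes "n \<ge> 1"
  shows "Max (num_flippable n ` {\<mu>. locally_valid n \<mu>}) = 2 * n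
         \<and> card {\<mu>. locally_valid n \<mu> \<and> num_flippable n \<mu> = 2 * n} = 2
         \<and> (\<forall>\<mu>. locally_valid n \<mu> \<and> num_flippable n \<mu> = 2 * n \<longrightarrow> blue n \<mu>)"
proof (intro conjI allI impI)
  have "finite (num_flippable n ` {\<mu>. locally_valid n \<mu>})"
    by (rule finite_subset[of _ "{..2*n}"]) (auto simp: num_flippable_le)
  moreover have "2 * n \<in> num_flippable n ` {\<mu>. locally_valid n \<mu>}"
    by (intro image_eqI[where x = "alternating_MV n 1"])
      (simp_all add: alternating_MV_valid num_flippable_alternating_MV)
  ultimately show "Max (num_flippable n ` {\<mu>. locally_valid n \<mu>}) = 2 * n"
    using num_flippable_le by (intro Max_eqI) auto
  show "card {\<mu>. locally_valid n \<mu> \<and> num_flippable n \<mu> = 2 * n} = 2"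
    unfolding max_flippable_assignments using alternating_MV_ne by simp
  fix \<mu> assume maximal: "locally_valid n \<mu> \<and> num_flippable n \<mu> = 2 * n"
  then have "\<mu> \<in> {alternating_MV n 1, alternating_MV n (-1)}"
    unfolding max_flippable_assignments[symmetric] by simp
  then obtain s where "s = 1 \<or> s = -1" "\<mu> = alternating_MV n s"
    by blast
  then have "num_flippable (n - 1) (restrict_MV n \<mu>) = 2 * (n - 1)"
    by (simp add: restrict_alternating_MV num_flippable_alternating_MV)
  with maximal assms show "blue n \<mu>"
    unfolding blue_def by (cases "n = 1") simp_all
qed

end
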